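(* Let $A$ be a finite set and let $(v_{xy})$ be a Llull matrix on $A$ with CLC structure that is not identically zero. Then $A$ has a top dominant irreducible component $X$ (for $(v_{xy})$), and moreover $v_{xy}>0$ for every $x\in X$ and every $y\in A$ with $y\neq x$.
   Context: A Llull matrix on a finite set $A$ is an assignment to each ordered pair of distinct elements $x\neq y$ of $A$ of a number $v_{xy}\in[0,1]$ such that $v_{xy}+v_{yx}\le 1$. Turnouts: $t_{xy}=v_{xy}+v_{yx}$; margins: $m_{xy}=v_{xy}-v_{yx}$. The matrix has CLC structure if there is a total order $\xi$ on $A$ such that, writing $x<_\xi y$ when $x$ precedes $y$ and $x'$ for the immediate successor of $x$ in $\xi$ (when it exists): (i) $v_{xy}\ge v_{yx}$ whenever $x<_\xi y$; (ii) $v_{xz}=\max(v_{xy},v_{yz})$ whenever $x<_\xi y<_\xi z$; (iii) $v_{zx}=\min(v_{zy},v_{yx})$ whenever $x<_\xi y<_\xi z$; (iv) $0\le t_{xz}-t_{x'z}\le m_{xx'}$ whenever $x'$ exists and $z\notin\{x,x'\}$. Indirect scores: for $x\neq y$, $\hat v_{xy}=\max$ over all paths $x=x_0,x_1,\dots,x_n=y$ of elements of $A$ (consecutive elements distinct) of $\min_{0\le i<n} v_{x_ix_{i+1}}$. Write $x\sim y$ iff $x=y$ or ($\hat v_{xy}>0$ and $\hat v_{yx}>0$); this is an equivalence relation whose classes are the irreducible components of $A$. Say $x$ dominates $y$ iff $\hat v_{xy}>0$ and $\hat v_{yx}=0$; this relation is compatible with $\sim$, so an irreducible component $C$ dominates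 a component $D$ iff some (equivalently every) $x\in C$ dominates some (equivalently every) $y\in D$. A top dominant irreducible component is an irreducible component that dominates every other irreducible component. *)

theory Defs
  imports Complex_Main
begin

text \<open>A Llull matrix on a finite set A: the function v, restricted to ordered pairs of
distinct elements of A.\<close>
definition llull_matrix :: "'a set \<Rightarrow> ('a \<Rightarrow> 'a \<Rightarrow> real) \<Rightarrow> bool" where
  "llull_matrix A v \<longleftrightarrow> (\<forall>x\<in>A. \<forall>y\<in>A. x \<noteq> y \<longrightarrow>
      0 \<le> v x y \<and> v x y \<le> 1 \<and> v x y + v y x \<le> 1)"

definition turnout :: "('a \<Rightarrow> 'a \<Rightarrow> real) \<Rightarrow> 'a \<Rightarrow> 'a \<Rightarrow> real" where
  "turnout v x y = v x y + v y x"

definition margin :: "('a \<Rightarrow> 'a \<Rightarrow> real) \<Rightarrow> 'a \<Rightarrow> 'a \<Rightarrow> real" where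
  "margin v x y = v x y - v y x"

text \<open>A total order \<xi> on the finite set A is represented by the list xs enumerating A
in \<xi>-order: x precedes y iff x occurs at a smaller index; the immediate successor of
xs!i is xs!(i+1).\<close>
definition clc_order :: "'a set \<Rightarrow> ('a \<Rightarrow> 'a \<Rightarrow> real) \<Rightarrow> 'a list \<Rightarrow> bool" where
  "clc_order A v xs \<longleftrightarrow> distinct xs \<and> set xs = A \<and>
     (\<forall>i j. i < j \<and> j < length xs \<longrightarrow> v (xs!i) (xs!j) \<ge> v (xs!j) (xs!i)) \<and>
     (\<forall>i j k. i < j \<and> j < k \<and> k < length xs \<longrightarrow>
        v (xs!i) (xs!k) = max (v (xs!i) (xs!j)) (v (xs!j) (xs!k))) \<and>
     (\<forall>i j k. i < j \<and> j < k \<and> k < length xs \<longrightarrow>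
        v (xs!k) (xs!i) = min (v (xs!k) (xs!j)) (v (xs!j) (xs!i))) \<and>
     (\<forall>i z. Suc i < length xs \<and> z \<in> A \<and> z \<noteq> xs!i \<and> z \<noteq> xs!Suc i \<longrightarrow>
        0 \<le> turnout v (xs!i) z - turnout v (xs!Suc i) z \<and>
        turnout v (xs!i) z - turnout v (xs!Suc i) z \<le> margin v (xs!i) (xs!Suc i))"

definition has_CLC :: "'a set \<Rightarrow> ('a \<Rightarrow> 'a \<Rightarrow> real) \<Rightarrow> bool" where
  "has_CLC A v \<longleftrightarrow> (\<exists>xs. clc_order A v xs)"

definition is_path :: "'a set \<Rightarrow> 'a \<Rightarrow> 'a \<Rightarrow> 'a list \<Rightarrow> bool" where
  "is_path A x y ps \<longleftrightarrow> length ps \<ge> 2 \<and> set ps \<subseteq> A \<and> hd ps = x \<and> last ps = y \<and>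
     (\<forall>i. Suc i < length ps \<longrightarrow> ps!i \<noteq> ps!Suc i)"

definition path_value :: "('a \<Rightarrow> 'a \<Rightarrow> real) \<Rightarrow> 'a list \<Rightarrow> real" where
  "path_value v ps = Min ((\<lambda>i. v (ps!i) (ps!Suc i)) ` {..<length ps - 1})"

text \<open>Indirect score: maximum over all paths (the set of path values is finite,
being contained in the finite set of entries of v on A).\<close>
definition indirect :: "'a set \<Rightarrow> ('a \<Rightarrow> 'a \<Rightarrow> real) \<Rightarrow> 'a \<Rightarrow> 'a \<Rightarrow> real" where
  "indirect A v x y = Max {path_value v ps | ps. is_path A x y ps}"

definition irr_equiv :: "'a set \<Rightarrow> ('a \<Rightarrow> 'a \<Rightarrow> real) \<Rightarrow> 'a \<Rightarrow> 'a \<Rightarrow> bool" where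
  "irr_equiv A v x y \<longleftrightarrow> x = y \<or> (indirect A v x y > 0 \<and> indirect A v y x > 0)"

definition dominates :: "'a set \<Rightarrow> ('a \<Rightarrow> 'a \<Rightarrow> real) \<Rightarrow> 'a \<Rightarrow> 'a \<Rightarrow> bool" where
  "dominates A v x y \<longleftrightarrow> indirect A v x y > 0 \<and> indirect A v y x = 0"

definition irr_component :: "'a set \<Rightarrow> ('a \<Rightarrow> 'a \<Rightarrow> real) \<Rightarrow> 'a set \<Rightarrow> bool" where
  "irr_component A v C \<longleftrightarrow> (\<exists>x\<in>A. C = {y\<in>A. irr_equiv A v x y})"

definition comp_dominates :: "'a set \<Rightarrow> ('a \<Rightarrow> 'a \<Rightarrow> real) \<Rightarrow> 'a set \<Rightarrow> 'a set \<Rightarrow> bool" where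
  "comp_dominates A v C D \<longleftrightarrow> (\<exists>x\<in>C. \<exists>y\<in>D. dominates A v x y)"

definition top_dominant_component :: "'a set \<Rightarrow> ('a \<Rightarrow> 'a \<Rightarrow> real) \<Rightarrow> 'a set \<Rightarrow> bool" where
  "top_dominant_component A v X \<longleftrightarrow> irr_component A v X \<and>
     (\<forall>D. irr_component A v D \<and> D \<noteq> X \<longrightarrow> comp_dominates A v X D)"

end

theory Submission
  imports Defs
begin

text \<open>Enumerate A along the CLC order as x_0, ..., x_{n-1} and let m be the first index with
v(x_{m+1}, x_m) = 0 (or m = n - 1). The backward scores before m are positive, and by the
min-rule (iii) every x_i with i \<le> m then has a positive score against each earlier element;
by the max-rule (ii) it has a positive score against each later one as soon as
v(x_i, x_{i+1}) > 0, which for i = m is forced by the turnout condition (iv) unless the matrix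
vanishes. Conversely every score from {x_{m+1}, ...} into X = {x_0, ..., x_m} is bounded by
v(x_{m+1}, x_m) = 0, so no path leaves the complement of X towards X.\<close>

lemma path_value_mem:
  assumes "is_path A x y ps"
  shows "path_value v ps \<in> (\<lambda>i. v (ps!i) (ps!Suc i)) ` {..<length ps - 1}"
proof -
  have "0 \<in> {..<length ps - 1}" using assms by (auto simp: is_path_def)
  then have "{..<length ps - 1} \<noteq> {}" by blast
  then show ?thesis unfolding path_value_def by (intro Min_in) auto
qed

lemma path_value_le:
  assumes "is_path A x y ps" "Suc i < length ps"
  shows "path_value v ps \<le> v (ps!i) (ps!Suc i)"
  unfolding path_value_def using assms by (intro Min_le) auto

lemma path_value_nonneg:
  assumes "llull_matrix A v" "is_path A x y ps"
  shows "0 \<le> path_value v ps"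
proof -
  obtain i where i: "i < length ps - 1" and eq: "path_value v ps = v (ps!i) (ps!Suc i)"
    using path_value_mem[OF assms(2), of v] by auto
  have "ps!i \<in> A" "ps!Suc i \<in> A" "ps!i \<noteq> ps!Suc i"
    using assms(2) i by (auto simp: is_path_def)
  then show ?thesis using assms(1) eq by (auto simp: llull_matrix_def)
qed

lemma finite_path_values:
  assumes "finite A"
  shows "finite {path_value v ps | ps. is_path A x y ps}"
proof (rule finite_subset)
  show "{path_value v ps | ps. is_path A x y ps} \<subseteq> (\<lambda>(a, b). v a b) ` (A \<times> A)"
  proof
    fix r assume "r \<in> {path_value v ps | ps. is_path A x y ps}"
    then obtain ps where p: "is_path A x y ps" and r: "r = path_value v ps" by auto
    obtain i where i: "i < length ps - 1" and eq: "path_value v ps = v (ps!i) (ps!Suc i)"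
      using path_value_mem[OF p, of v] by auto
    have "ps!i \<in> A" "ps!Suc i \<in> A" using p i by (auto simp: is_path_def)
    then show "r \<in> (\<lambda>(a, b). v a b) ` (A \<times> A)" using r eq by force
  qed
qed (use assms in auto)

lemma is_path_two: "x \<in> A \<Longrightarrow> y \<in> A \<Longrightarrow> x \<noteq> y \<Longrightarrow> is_path A x y [x, y]"
  unfolding is_path_def by (auto simp: less_Suc_eq)

lemma path_value_two: "path_value v [x, y] = v x y"
  unfolding path_value_def by (simp add: lessThan_Suc)

lemma indirect_ge:
  assumes "finite A" "x \<in> A" "y \<in> A" "x \<noteq> y"
  shows "v x y \<le> indirect A v x y"
  unfolding indirect_def
  using is_path_two[OF assms(2-4)] path_value_two[of v x y]
  by (intro Max_ge[OF finite_path_values[OF assms(1)]]) force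

lemma indirect_eq_0I:
  assumes "finite A" "llull_matrix A v" "x \<in> A" "y \<in> A" "x \<noteq> y"
    and "\<And>ps. is_path A x y ps \<Longrightarrow> path_value v ps \<le> 0"
  shows "indirect A v x y = 0"
  unfolding indirect_def
proof (rule Max_eqI[OF finite_path_values[OF assms(1)]])
  show "r \<le> 0" if "r \<in> {path_value v ps | ps. is_path A x y ps}" for r
    using that assms(6) by auto
next
  have p: "is_path A x y [x, y]" using is_path_two[OF assms(3-5)] .
  then have "path_value v [x, y] = 0"
    using assms(6) path_value_nonneg[OF assms(2)] by (simp add: order_antisym)
  then show "0 \<in> {path_value v ps | ps. is_path A x y ps}" using p by force
qed

lemma exists_crossing_step:
  "ps \<noteq> [] \<Longrightarrow> P (hd ps) \<Longrightarrow> \<not> P (last ps) \<Longrightarrow>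
   \<exists>i. Suc i < length ps \<and> P (ps!i) \<and> \<not> P (ps!Suc i)"
proof (induction ps)
  case (Cons a ps)
  show ?case
  proof (cases "ps = []")
    case True
    with Cons show ?thesis by simp
  next
    case nonempty: False
    show ?thesis
    proof (cases "P (hd ps)")
      case True
      with Cons nonempty obtain i where "Suc i < length ps \<and> P (ps!i) \<and> \<not> P (ps!Suc i)"
        by auto
      then show ?thesis by (intro exI[of _ "Suc i"]) auto
    next
      case False
      with Cons nonempty show ?thesis by (intro exI[of _ 0]) (auto simp: hd_conv_nth)
    qed
  qed
qed simp

text \<open>Every path from S to its complement has a step leaving S.\<close>
lemma indirect_eq_0_if_no_edge_leaves:
  assumes "finite A" "llull_matrix A v" "x \<in> A \<inter> S" "y \<in> A - S"
    and no_edge: "\<And>a b. a \<in> A \<inter> S \<Longrightarrow> b \<in> A - S \<Longrightarrow> v a b \<le> 0"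
  shows "indirect A v x y = 0"
proof (rule indirect_eq_0I[OF assms(1,2)])
  fix ps assume ps: "is_path A x y ps"
  then have "ps \<noteq> []" "hd ps \<in> S" "last ps \<notin> S"
    using assms(3,4) by (auto simp: is_path_def)
  then obtain i where i: "Suc i < length ps" "ps!i \<in> S" "ps!Suc i \<notin> S"
    using exists_crossing_step[of ps "\<lambda>w. w \<in> S"] by blast
  then have "ps!i \<in> A" "ps!Suc i \<in> A"
    using ps nth_mem[of i ps] nth_mem[of "Suc i" ps] by (auto simp: is_path_def)
  with i no_edge have "v (ps!i) (ps!Suc i) \<le> 0" by blast
  then show "path_value v ps \<le> 0"
    using path_value_le[OF ps i(1), of v] by linarith
qed (use assms in auto)

lemma top_dominant_componentI:
  assumes "finite A" "llull_matrix A v" "X \<subseteq> A" "X \<noteq> {}"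
    and pos: "\<And>x y. x \<in> X \<Longrightarrow> y \<in> A \<Longrightarrow> y \<noteq> x \<Longrightarrow> 0 < v x y"
    and no_edge_in: "\<And>x y. x \<in> X \<Longrightarrow> y \<in> A - X \<Longrightarrow> v y x \<le> 0"
  shows "top_dominant_component A v X"
proof -
  have indirect_pos: "0 < indirect A v x y" if "x \<in> X" "y \<in> A" "y \<noteq> x" for x y
  proof -
    have "v x y \<le> indirect A v x y"
      using indirect_ge[OF assms(1)] that assms(3) by blast
    with pos[OF that] show ?thesis by linarith
  qed
  have indirect_in: "indirect A v y x = 0" if "x \<in> X" "y \<in> A - X" for x y
  proof (rule indirect_eq_0_if_no_edge_leaves[OF assms(1,2)])
    show "y \<in> A \<inter> (A - X)" "x \<in> A - (A - X)" using that assms(3) by auto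
  qed (use no_edge_in in blast)
  have class_eq: "{y \<in> A. irr_equiv A v x y} = X" if x: "x \<in> X" for x
  proof (intro set_eqI iffI)
    fix y assume y: "y \<in> {y \<in> A. irr_equiv A v x y}"
    show "y \<in> X"
    proof (rule ccontr)
      assume "y \<notin> X"
      with y have "indirect A v y x = 0" "x \<noteq> y" using indirect_in[OF x] x by auto
      with y show False unfolding irr_equiv_def by simp
    qed
  next
    fix y assume y: "y \<in> X"
    then have "x = y \<or> (0 < indirect A v x y \<and> 0 < indirect A v y x)"
      using indirect_pos x assms(3) by blast
    then show "y \<in> {y \<in> A. irr_equiv A v x y}"
      using y assms(3) unfolding irr_equiv_def by blast
  qed
  obtain x0 where x0: "x0 \<in> X" using assms(4) by blast
  have "irr_component A v X"
    unfolding irr_component_def using class_eq[OF x0] x0 assms(3) by blast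
  moreover have "comp_dominates A v X D" if D: "irr_component A v D" "D \<noteq> X" for D
  proof -
    obtain x where x: "x \<in> A" "D = {y \<in> A. irr_equiv A v x y}"
      using D(1) unfolding irr_component_def by blast
    with class_eq D(2) have "x \<in> A - X" by blast
    then have "dominates A v x0 x"
      using indirect_pos[OF x0, of x] indirect_in[OF x0, of x] x0 unfolding dominates_def by auto
    moreover have "x \<in> D" using x by (simp add: irr_equiv_def)
    ultimately show ?thesis unfolding comp_dominates_def using x0 by blast
  qed
  ultimately show ?thesis unfolding top_dominant_component_def by blast
qed

locale clc_ordered =
  fixes A :: "'a set" and v :: "'a \<Rightarrow> 'a \<Rightarrow> real" and xs :: "'a list"
  assumes llull: "llull_matrix A v" and clc: "clc_order A v xs"
begin

abbreviation "n \<equiv> length xs"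

definition fwd :: "nat \<Rightarrow> real" where "fwd l = v (xs!l) (xs!Suc l)"
definition bwd :: "nat \<Rightarrow> real" where "bwd l = v (xs!Suc l) (xs!l)"

lemma set_xs: "set xs = A"
  using clc by (simp add: clc_order_def)

lemma nth_eq_iff: "i < n \<Longrightarrow> j < n \<Longrightarrow> xs!i = xs!j \<longleftrightarrow> i = j"
  using clc by (simp add: clc_order_def nth_eq_iff_index_eq)

lemma nth_mem_A: "i < n \<Longrightarrow> xs!i \<in> A"
  using set_xs by auto

lemma clc_le: "i < j \<Longrightarrow> j < n \<Longrightarrow> v (xs!j) (xs!i) \<le> v (xs!i) (xs!j)"
  using clc by (simp add: clc_order_def)

lemma clc_max:
  "i < j \<Longrightarrow> j < k \<Longrightarrow> k < n \<Longrightarrow> v (xs!i) (xs!k) = max (v (xs!i) (xs!j)) (v (xs!j) (xs!k))"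
  using clc by (simp add: clc_order_def)

lemma clc_min:
  "i < j \<Longrightarrow> j < k \<Longrightarrow> k < n \<Longrightarrow> v (xs!k) (xs!i) = min (v (xs!k) (xs!j)) (v (xs!j) (xs!i))"
  using clc by (simp add: clc_order_def)

lemma clc_turnout:
  assumes "Suc i < n" "z \<in> A" "z \<noteq> xs!i" "z \<noteq> xs!Suc i"
  shows "0 \<le> turnout v (xs!i) z - turnout v (xs!Suc i) z"
    and "turnout v (xs!i) z - turnout v (xs!Suc i) z \<le> margin v (xs!i) (xs!Suc i)"
  using clc assms by (simp_all add: clc_order_def)

lemma nth_nonneg: "i < n \<Longrightarrow> j < n \<Longrightarrow> i \<noteq> j \<Longrightarrow> 0 \<le> v (xs!i) (xs!j)"
  using llull nth_eq_iff nth_mem_A unfolding llull_matrix_def by blast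

lemma bwd_le_fwd: "Suc l < n \<Longrightarrow> bwd l \<le> fwd l"
  unfolding bwd_def fwd_def using clc_le by simp

lemma bwd_nonneg: "Suc l < n \<Longrightarrow> 0 \<le> bwd l"
  unfolding bwd_def using nth_nonneg by simp

lemma fwd_le: assumes "i \<le> l" "l < k" "k < n"
  shows "fwd l \<le> v (xs!i) (xs!k)"
proof -
  have "v (xs!l) (xs!Suc l) \<le> v (xs!l) (xs!k)"
    using clc_max[of l "Suc l" k] assms by (cases "Suc l = k") simp_all
  also have "\<dots> \<le> v (xs!i) (xs!k)"
    using clc_max[of i l k] assms by (cases "i = l") simp_all
  finally show ?thesis unfolding fwd_def .
qed

lemma le_bwd: assumes "q \<le> l" "l < p" "p < n"
  shows "v (xs!p) (xs!q) \<le> bwd l"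
proof -
  have "v (xs!p) (xs!q) \<le> v (xs!p) (xs!l)"
    using clc_min[of q l p] assms by (cases "q = l") simp_all
  also have "\<dots> \<le> v (xs!Suc l) (xs!l)"
    using clc_min[of l "Suc l" p] assms by (cases "Suc l = p") simp_all
  finally show ?thesis unfolding bwd_def .
qed

lemma bwd_chain_pos:
  "p < n \<Longrightarrow> q < p \<Longrightarrow> (\<And>l. q \<le> l \<Longrightarrow> l < p \<Longrightarrow> 0 < bwd l) \<Longrightarrow> 0 < v (xs!p) (xs!q)"
proof (induction p arbitrary: q)
  case (Suc p)
  show ?case
  proof (cases "q = p")
    case True
    with Suc.prems show ?thesis unfolding bwd_def by auto
  next
    case False
    with Suc have "0 < v (xs!p) (xs!q)" "0 < bwd p" "q < p" by auto
    with Suc.prems show ?thesis using clc_min[of q p "Suc p"] unfolding bwd_def by simp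
  qed
qed simp

lemma fwd_chain_nonpos:
  "k < n \<Longrightarrow> i < k \<Longrightarrow> (\<And>l. i \<le> l \<Longrightarrow> l < k \<Longrightarrow> fwd l \<le> 0) \<Longrightarrow> v (xs!i) (xs!k) \<le> 0"
proof (induction k arbitrary: i)
  case (Suc k)
  show ?case
  proof (cases "i = k")
    case True
    with Suc.prems show ?thesis unfolding fwd_def by auto
  next
    case False
    with Suc have "v (xs!i) (xs!k) \<le> 0" "fwd k \<le> 0" "i < k" by auto
    with Suc.prems show ?thesis using clc_max[of i k "Suc k"] unfolding fwd_def by simp
  qed
qed simp

lemma eq_0_if_fwd_eq_0:
  assumes fwd0: "\<And>l. Suc l < n \<Longrightarrow> fwd l = 0" and "x \<in> A" "y \<in> A" "x \<noteq> y"
  shows "v x y = 0"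
proof -
  obtain i k where ik: "i < n" "k < n" "x = xs!i" "y = xs!k"
    using assms(2,3) set_xs by (metis in_set_conv_nth)
  with assms(4) consider "i < k" | "k < i" by fastforce
  then have "v x y \<le> 0"
  proof cases
    case 1
    then show ?thesis using fwd_chain_nonpos[of k i] fwd0 ik by simp
  next
    case 2
    then show ?thesis using le_bwd[of k k i] bwd_le_fwd[of k] fwd0[of k] ik by simp
  qed
  moreover have "0 \<le> v x y" using nth_nonneg[of i k] ik assms(4) by auto
  ultimately show ?thesis by simp
qed

text \<open>Lower turnout bound (iv) with z = x_j: t(x_{j+1}, x_j) = 0 forces
t(x_{j+1}, x_j) - t(x_{j+2}, x_j) = -v(x_{j+1}, x_{j+2}) \<ge> 0.\<close>
lemma fwd_eq_0_Suc:
  assumes "Suc (Suc j) < n" "fwd j = 0"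
  shows "fwd (Suc j) = 0"
proof -
  let ?l = "Suc j"
  have bj: "bwd j = 0" using bwd_le_fwd[of j] bwd_nonneg[of j] assms by simp
  have z: "xs!j \<in> A" "xs!j \<noteq> xs!?l" "xs!j \<noteq> xs!Suc ?l"
    using nth_mem_A nth_eq_iff assms(1) by auto
  have "v (xs!j) (xs!Suc ?l) = max (fwd j) (fwd ?l)"
    using clc_max[of j ?l "Suc ?l"] assms(1) unfolding fwd_def by simp
  moreover have "v (xs!Suc ?l) (xs!j) = min (bwd ?l) (bwd j)"
    using clc_min[of j ?l "Suc ?l"] assms(1) unfolding bwd_def by simp
  ultimately show ?thesis
    using clc_turnout(1)[OF assms(1) z] assms bj bwd_nonneg[of ?l] nth_nonneg[of ?l "Suc ?l"]
    unfolding turnout_def fwd_def bwd_def by simp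
qed

lemma fwd_eq_0_from_0: "fwd 0 = 0 \<Longrightarrow> Suc l < n \<Longrightarrow> fwd l = 0"
  by (induction l) (auto intro: fwd_eq_0_Suc)

text \<open>Upper turnout bound (iv) at x_{j+1} with z = x_j: if both scores between x_{j+1}
and x_{j+2} vanished, the margin would be 0 while the turnout difference is v(x_{j+1}, x_j).\<close>
lemma fwd_pos_if_bwd_eq_0:
  assumes "Suc (Suc j) < n" "0 < bwd j" "bwd (Suc j) = 0"
  shows "0 < fwd (Suc j)"
proof (rule ccontr)
  let ?m = "Suc j"
  assume "\<not> 0 < fwd ?m"
  then have fm: "fwd ?m = 0" using bwd_le_fwd[of ?m] assms by simp
  have z: "xs!j \<in> A" "xs!j \<noteq> xs!?m" "xs!j \<noteq> xs!Suc ?m"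
    using nth_mem_A nth_eq_iff assms(1) by auto
  have "v (xs!j) (xs!Suc ?m) = max (fwd j) (fwd ?m)"
    using clc_max[of j ?m "Suc ?m"] assms(1) unfolding fwd_def by simp
  moreover have "v (xs!Suc ?m) (xs!j) = min (bwd ?m) (bwd j)"
    using clc_min[of j ?m "Suc ?m"] assms(1) unfolding bwd_def by simp
  moreover have "0 \<le> fwd j" using bwd_le_fwd[of j] assms by simp
  ultimately show False
    using clc_turnout(2)[OF assms(1) z] assms fm
    unfolding turnout_def margin_def fwd_def bwd_def by simp
qed

lemma top_block:
  assumes nonzero: "\<exists>x\<in>A. \<exists>y\<in>A. x \<noteq> y \<and> v x y \<noteq> 0"
  obtains m where "m < n"
    and "\<And>i k. i \<le> m \<Longrightarrow> k < n \<Longrightarrow> k \<noteq> i \<Longrightarrow> 0 < v (xs!i) (xs!k)"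
    and "\<And>p q. m < p \<Longrightarrow> p < n \<Longrightarrow> q \<le> m \<Longrightarrow> v (xs!p) (xs!q) \<le> 0"
proof -
  have "0 < n" using nonzero set_xs by auto
  have fwd0: "0 < fwd 0" if "1 < n"
    using eq_0_if_fwd_eq_0 fwd_eq_0_from_0 bwd_le_fwd[of 0] bwd_nonneg[of 0] nonzero that
    by force
  define m where "m = (LEAST l. \<not> (Suc l < n \<and> 0 < bwd l))"
  have m_min: "Suc l < n \<and> 0 < bwd l" if "l < m" for l
    using not_less_Least that unfolding m_def by blast
  have n_stop: "\<not> (Suc (n - 1) < n \<and> 0 < bwd (n - 1))" using \<open>0 < n\<close> by simp
  then have "m \<le> n - 1" unfolding m_def by (rule Least_le)
  then have "m < n" using \<open>0 < n\<close> by linarith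
  have m_stop: "\<not> (Suc m < n \<and> 0 < bwd m)" unfolding m_def using n_stop by (rule LeastI)
  have bwd_m: "bwd m = 0" if "Suc m < n"
    using m_stop bwd_nonneg[OF that] that by simp
  have fwd_pos: "0 < fwd i" if "i \<le> m" "Suc i < n" for i
  proof (cases "i < m")
    case True
    then show ?thesis using m_min bwd_le_fwd by fastforce
  next
    case False
    with that have "i = m" by simp
    then show ?thesis
      using fwd0 fwd_pos_if_bwd_eq_0 m_min bwd_m that by (cases m) auto
  qed
  show ?thesis
  proof
    show "m < n" by fact
    show "0 < v (xs!i) (xs!k)" if "i \<le> m" "k < n" "k \<noteq> i" for i k
    proof (cases "k < i")
      case True
      then show ?thesis using bwd_chain_pos[of i k] m_min that \<open>m < n\<close> by force
    next
      case False
      then show ?thesis using fwd_pos[of i] fwd_le[of i i k] that by simp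
    qed
    show "v (xs!p) (xs!q) \<le> 0" if "m < p" "p < n" "q \<le> m" for p q
      using le_bwd[of q m p] bwd_m that by simp
  qed
qed

end

theorem proposition3p3:
  fixes A :: "'a set" and v :: "'a \<Rightarrow> 'a \<Rightarrow> real"
  assumes "finite A"
    and "llull_matrix A v"
    and "has_CLC A v"
    and "\<exists>x\<in>A. \<exists>y\<in>A. x \<noteq> y \<and> v x y \<noteq> 0"
  shows "\<exists>X. top_dominant_component A v X \<and> (\<forall>x\<in>X. \<forall>y\<in>A. y \<noteq> x \<longrightarrow> v x y > 0)"
proof -
  obtain xs where "clc_order A v xs" using assms(3) unfolding has_CLC_def by blast
  then interpret clc_ordered A v xs using assms(2) by unfold_locales
  obtain m where m: "m < n"
    and pos: "\<And>i k. i \<le> m \<Longrightarrow> k < n \<Longrightarrow> k \<noteq> i \<Longrightarrow> 0 < v (xs!i) (xs!k)"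
    and no_edge_in: "\<And>p q. m < p \<Longrightarrow> p < n \<Longrightarrow> q \<le> m \<Longrightarrow> v (xs!p) (xs!q) \<le> 0"
    using top_block[OF assms(4)] by blast
  define X where "X = (!) xs ` {..m}"
  have A_eq: "A = (!) xs ` {..<n}" using set_xs by (auto simp: set_conv_nth)
  have pos_X: "0 < v x y" if "x \<in> X" "y \<in> A" "y \<noteq> x" for x y
    using that pos unfolding X_def A_eq by blast
  have "top_dominant_component A v X"
  proof (rule top_dominant_componentI[OF assms(1,2)])
    show "X \<subseteq> A" "X \<noteq> {}" using m unfolding X_def A_eq by auto
    show "v y x \<le> 0" if x: "x \<in> X" and y: "y \<in> A - X" for x y
    proof -
      obtain q where "q \<le> m" "x = xs!q" using x unfolding X_def by auto
      moreover obtain p where "p < n" "y = xs!p" using y unfolding A_eq by auto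
      moreover have "m < p" using y \<open>y = xs!p\<close> unfolding X_def by force
      ultimately show ?thesis using no_edge_in by simp
    qed
  qed (rule pos_X)
  with pos_X show ?thesis by blast
qed

end
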